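(* Let $T_1$ be a quadtree in $\mathbb{R}^d$ and let $j \ge 1$. Given the set of cells $T_j$ with brand $j$ (as in the construction of the extended quadtree described in the context), the set $T_{j+1}$ of cells that balance the cells of $T_j$ is unique.
   Context: A quadtree on an axis-aligned root hypercube $R\subset\mathbb{R}^d$ is a hierarchical decomposition in which every node has an associated axis-aligned hypercube (cell) and is either a leaf or has $2^d$ equal-sized children whose cells subdivide its cell. The size $|C|$ of a cell is its edge length. Two cells are neighbors if they are interior-disjoint and share (part of) a $(d-1)$-dimensional facet. For an integer $j$, a cell $C$ is $2^j$-smooth if every leaf neighboring $C$ has size at most $2^j|C|$. Extended quadtree: the cells of a given quadtree $T_1$ are called true cells and get brand $1$. Recursively, for $j\ge1$, let $T^j$ be the quadtree formed by $\bigcup_{i\le j}T_i$, and let $T_{j+1}$ be the minimal set of cells obtained by splitting cells of $T^j$ such that every cell of $T_j$ is $2^j$-smooth in the resulting quadtree; the cells of $T_{j+1}$ get brand $j+1$. The extended quadtree is $T^*=T^{d+1}$. *)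

theory Defs
  imports Complex_Main
begin

text \<open>Dyadic cells of the root hypercube R, which (by scale/translation invariance)
is taken to be the unit cube [0,1]^d.  The dimension d is the cardinality of the
finite index type 'd.  A cell (k, c) is the closed cube with edge length 2^-k and
i-th coordinate range [c i / 2^k, (c i + 1) / 2^k].\<close>

type_synonym 'd cell = "nat \<times> ('d \<Rightarrow> nat)"

definition valid_cell :: "'d::finite cell \<Rightarrow> bool" where
  "valid_cell C \<longleftrightarrow> (\<forall>i. snd C i < 2 ^ fst C)"

definition root_cell :: "'d::finite cell" where
  "root_cell = (0, (\<lambda>_. 0))"

definition children :: "'d::finite cell \<Rightarrow> 'd cell set" where
  "children C = {(Suc (fst C), c') | c'. \<forall>i. c' i = 2 * snd C i \<or> c' i = 2 * snd C i + 1}"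

definition cell_size :: "'d::finite cell \<Rightarrow> real" where
  "cell_size C = 1 / 2 ^ fst C"

definition cell_lo :: "'d::finite cell \<Rightarrow> 'd \<Rightarrow> real" where
  "cell_lo C i = real (snd C i) / 2 ^ fst C"

definition cell_hi :: "'d::finite cell \<Rightarrow> 'd \<Rightarrow> real" where
  "cell_hi C i = real (snd C i + 1) / 2 ^ fst C"

definition quadtree :: "'d::finite cell set \<Rightarrow> bool" where
  "quadtree Q \<longleftrightarrow> finite Q \<and> root_cell \<in> Q \<and> (\<forall>C\<in>Q. valid_cell C)
     \<and> (\<forall>C\<in>Q. children C \<subseteq> Q \<or> children C \<inter> Q = {})
     \<and> (\<forall>C\<in>Q. C \<noteq> root_cell \<longrightarrow> (\<exists>P\<in>Q. C \<in> children P))"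

definition leaf :: "'d::finite cell set \<Rightarrow> 'd cell \<Rightarrow> bool" where
  "leaf Q C \<longleftrightarrow> C \<in> Q \<and> children C \<inter> Q = {}"

text \<open>Neighbors: interior-disjoint and sharing a (d-1)-dimensional part of a facet:
the closed boxes touch along one coordinate and their open ranges overlap in all
other coordinates.\<close>
definition neighbors :: "'d::finite cell \<Rightarrow> 'd cell \<Rightarrow> bool" where
  "neighbors C D \<longleftrightarrow> (\<exists>i. (cell_hi C i = cell_lo D i \<or> cell_hi D i = cell_lo C i)
      \<and> (\<forall>l. l \<noteq> i \<longrightarrow> cell_lo C l < cell_hi D l \<and> cell_lo D l < cell_hi C l))"

definition smooth :: "'d::finite cell set \<Rightarrow> nat \<Rightarrow> 'd cell \<Rightarrow> bool" where
  "smooth Q j C \<longleftrightarrow> (\<forall>L. leaf Q L \<and> neighbors L C \<longrightarrow> cell_size L \<le> 2 ^ j * cell_size C)"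

definition balancing_set :: "'d::finite cell set \<Rightarrow> 'd cell set \<Rightarrow> nat \<Rightarrow> 'd cell set \<Rightarrow> bool" where
  "balancing_set Tup Tj j S \<longleftrightarrow> quadtree (Tup \<union> S) \<and> (\<forall>C\<in>Tj. smooth (Tup \<union> S) j C)"

definition minimal_balancing_set :: "'d::finite cell set \<Rightarrow> 'd cell set \<Rightarrow> nat \<Rightarrow> 'd cell set \<Rightarrow> bool" where
  "minimal_balancing_set Tup Tj j S \<longleftrightarrow> balancing_set Tup Tj j S
     \<and> (\<forall>S'. balancing_set Tup Tj j S' \<and> S' \<subseteq> S \<longrightarrow> S' = S)"

end

theory Submission
  imports Defs
begin

text \<open>Balancing sets are closed under intersection: the intersection of two quadtrees is
a quadtree because every cell has a unique parent, and a leaf of the intersection is a leaf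
of one of the two trees, so smoothness survives. Hence there is at most one minimal balancing
set. One exists because the complete quadtree of depth N balances everything of depth at
most N, and a finite balancing set contains a minimal one.\<close>

definition parent :: "'d::finite cell \<Rightarrow> 'd cell" where
  "parent C = (fst C - 1, \<lambda>i. snd C i div 2)"

lemma mem_children_iff: "C \<in> children P \<longleftrightarrow> 0 < fst C \<and> P = parent C"
proof
  assume "C \<in> children P"
  then obtain c' where C: "C = (Suc (fst P), c')"
    and digits: "\<And>i. c' i = 2 * snd P i \<or> c' i = 2 * snd P i + 1"
    by (auto simp: children_def)
  have "c' i div 2 = snd P i" for i
    using digits[of i] by auto
  then show "0 < fst C \<and> P = parent C"
    by (simp add: C parent_def prod_eq_iff)
next
  assume "0 < fst C \<and> P = parent C"
  then show "C \<in> children P"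
    by (cases C) (auto simp: children_def parent_def gr0_conv_Suc)
qed

lemma children_ne_empty: "children C \<noteq> {}"
  by (auto simp: children_def)

lemma quadtree_Int:
  assumes "quadtree Q1" "quadtree Q2"
  shows "quadtree (Q1 \<inter> Q2)"
proof -
  have "\<exists>P\<in>Q1 \<inter> Q2. C \<in> children P" if "C \<in> Q1 \<inter> Q2" "C \<noteq> root_cell" for C
    using assms that unfolding quadtree_def mem_children_iff by blast
  with assms show ?thesis
    unfolding quadtree_def by blast
qed

lemma leaf_Int_imp_leaf:
  assumes "quadtree Q1" "quadtree Q2" "leaf (Q1 \<inter> Q2) L"
  shows "leaf Q1 L \<or> leaf Q2 L"
  using assms children_ne_empty[of L] unfolding leaf_def quadtree_def by blast

lemma balancing_set_Int:
  assumes "balancing_set Tup Tj j S1" "balancing_set Tup Tj j S2"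
  shows "balancing_set Tup Tj j (S1 \<inter> S2)"
proof -
  have Int_eq: "Tup \<union> (S1 \<inter> S2) = (Tup \<union> S1) \<inter> (Tup \<union> S2)"
    by blast
  have trees: "quadtree (Tup \<union> S1)" "quadtree (Tup \<union> S2)"
    using assms by (auto simp: balancing_set_def)
  have "smooth ((Tup \<union> S1) \<inter> (Tup \<union> S2)) j C" if "C \<in> Tj" for C
    using that assms leaf_Int_imp_leaf[OF trees]
    unfolding balancing_set_def smooth_def by blast
  with trees show ?thesis
    unfolding balancing_set_def Int_eq by (simp add: quadtree_Int)
qed

lemma minimal_balancing_set_unique:
  assumes "minimal_balancing_set Tup Tj j S1" "minimal_balancing_set Tup Tj j S2"
  shows "S1 = S2"
proof -
  have "balancing_set Tup Tj j (S1 \<inter> S2)"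
    using assms balancing_set_Int by (auto simp: minimal_balancing_set_def)
  with assms have "S1 \<inter> S2 = S1" "S1 \<inter> S2 = S2"
    by (auto simp: minimal_balancing_set_def)
  then show ?thesis by simp
qed

lemma ex_minimal_balancing_set:
  assumes "balancing_set Tup Tj j S0" "finite S0"
  shows "\<exists>S. minimal_balancing_set Tup Tj j S"
proof -
  obtain S where S: "balancing_set Tup Tj j S \<and> S \<subseteq> S0"
    and least: "\<And>S'. balancing_set Tup Tj j S' \<and> S' \<subseteq> S0 \<Longrightarrow> card S \<le> card S'"
    using ex_has_least_nat[of "\<lambda>S. balancing_set Tup Tj j S \<and> S \<subseteq> S0" S0 card] assms(1)
    by blast
  have "S' = S" if "balancing_set Tup Tj j S'" "S' \<subseteq> S" for S'
    using that S least[of S'] finite_subset[OF _ assms(2)] card_seteq by blast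
  with S show ?thesis
    unfolding minimal_balancing_set_def by blast
qed

definition full_cells :: "nat \<Rightarrow> 'd::finite cell set" where
  "full_cells N = {C. valid_cell C \<and> fst C \<le> N}"

lemma finite_full_cells: "finite (full_cells N :: 'd::finite cell set)"
proof -
  let ?codes = "{c :: 'd \<Rightarrow> nat. \<forall>x. (x \<in> UNIV \<longrightarrow> c x \<in> {..<2 ^ N}) \<and> (x \<notin> UNIV \<longrightarrow> c x = 0)}"
  have "full_cells N \<subseteq> {..N} \<times> ?codes"
  proof
    fix C :: "'d cell"
    assume "C \<in> full_cells N"
    then have "valid_cell C" "(2::nat) ^ fst C \<le> 2 ^ N" "fst C \<le> N"
      by (auto simp: full_cells_def power_increasing)
    then show "C \<in> {..N} \<times> ?codes"
      by (cases C) (auto simp: valid_cell_def intro: less_le_trans)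
  qed
  moreover have "finite ({..N} \<times> ?codes)"
    by (intro finite_cartesian_product finite_set_of_finite_funs) auto
  ultimately show ?thesis
    by (rule finite_subset)
qed

lemma valid_cell_child:
  assumes "valid_cell C" "D \<in> children C"
  shows "valid_cell D"
proof -
  obtain c' where D: "D = (Suc (fst C), c')"
    and digits: "\<And>i. c' i = 2 * snd C i \<or> c' i = 2 * snd C i + 1"
    using assms(2) by (auto simp: children_def)
  have "c' i < 2 ^ Suc (fst C)" for i
  proof -
    have "snd C i < 2 ^ fst C"
      using assms(1) by (simp add: valid_cell_def)
    then show ?thesis
      using digits[of i] by auto
  qed
  then show ?thesis
    by (simp add: D valid_cell_def)
qed

lemma valid_cell_parent:
  assumes "valid_cell C"
  shows "valid_cell (parent C)"
  using assms by (cases "fst C")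
    (auto simp: valid_cell_def parent_def less_mult_imp_div_less mult.commute)

lemma quadtree_full_cells: "quadtree (full_cells N :: 'd::finite cell set)"
  unfolding quadtree_def
proof (intro conjI ballI impI)
  show "finite (full_cells N :: 'd cell set)"
    by (rule finite_full_cells)
  show "root_cell \<in> (full_cells N :: 'd cell set)"
    by (simp add: full_cells_def root_cell_def valid_cell_def)
  fix C :: "'d cell"
  assume C: "C \<in> full_cells N"
  then show "valid_cell C"
    by (simp add: full_cells_def)
  show "children C \<subseteq> full_cells N \<or> children C \<inter> full_cells N = {}"
    using C valid_cell_child[of C]
    by (cases "fst C < N") (auto simp: full_cells_def children_def)
  assume "C \<noteq> root_cell"
  have "fst C \<noteq> 0"
  proof
    assume "fst C = 0"
    with C have "snd C = (\<lambda>_. 0)"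
      by (auto simp: full_cells_def valid_cell_def fun_eq_iff)
    with \<open>fst C = 0\<close> \<open>C \<noteq> root_cell\<close> show False
      by (simp add: root_cell_def prod_eq_iff)
  qed
  with C have "C \<in> children (parent C)" "parent C \<in> full_cells N"
    by (auto simp: mem_children_iff full_cells_def valid_cell_parent) (simp add: parent_def)
  then show "\<exists>P\<in>full_cells N. C \<in> children P"
    by blast
qed

lemma leaf_full_cells_depth:
  assumes "leaf (full_cells N) L"
  shows "fst L = N"
proof (rule ccontr)
  assume "fst L \<noteq> N"
  with assms have "children L \<subseteq> full_cells N"
    using valid_cell_child[of L]
    by (auto simp: leaf_def full_cells_def) (auto simp: children_def)
  with assms children_ne_empty[of L] show False
    by (auto simp: leaf_def)
qed

lemma balancing_set_full_cells:
  assumes "Tup \<subseteq> full_cells N" "Tj \<subseteq> full_cells N"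
  shows "balancing_set Tup Tj j (full_cells N)"
proof -
  have union_eq: "Tup \<union> full_cells N = full_cells N"
    using assms(1) by blast
  have "cell_size L \<le> 2 ^ j * cell_size C" if "leaf (full_cells N) L" "C \<in> Tj" for L C
  proof -
    have "(2::real) ^ fst C \<le> 2 ^ N"
      using that(2) assms(2) by (auto simp: full_cells_def intro: power_increasing)
    then have "1 / (2::real) ^ N \<le> 1 / 2 ^ fst C"
      by (simp add: frac_le)
    also have "\<dots> \<le> 2 ^ j * (1 / 2 ^ fst C)"
      by (simp add: field_simps)
    finally show ?thesis
      using leaf_full_cells_depth[OF that(1)] by (simp add: cell_size_def)
  qed
  then show ?thesis
    unfolding balancing_set_def smooth_def union_eq using quadtree_full_cells by blast
qed

lemma quadtree_subset_full_cells:
  assumes "quadtree Q"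
  shows "Q \<subseteq> full_cells (Max (fst ` Q))"
proof
  fix C
  assume "C \<in> Q"
  with assms show "C \<in> full_cells (Max (fst ` Q))"
    by (simp add: quadtree_def full_cells_def)
qed

theorem lemma12:
  fixes T :: "nat \<Rightarrow> 'd::finite cell set" and j :: nat
  assumes "quadtree (T 1)"
    and "j \<ge> 1"
    and "\<And>i. 1 \<le> i \<Longrightarrow> i < j \<Longrightarrow>
           minimal_balancing_set (\<Union>l\<in>{1..i}. T l) (T i) i (T (Suc i))"
  shows "\<exists>!S. minimal_balancing_set (\<Union>l\<in>{1..j}. T l) (T j) j S"
proof -
  let ?Tup = "\<Union>l\<in>{1..j}. T l"
  have "quadtree ?Tup"
  proof (cases "j = 1")
    case False
    then obtain i where i: "j = Suc i" "1 \<le> i"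
      using assms(2) by (cases j) auto
    then have "?Tup = (\<Union>l\<in>{1..i}. T l) \<union> T (Suc i)"
      by (auto simp: atLeastAtMostSuc_conv)
    with assms(3)[of i] i show ?thesis
      by (simp add: minimal_balancing_set_def balancing_set_def)
  qed (use assms(1) in simp)
  then obtain N where "?Tup \<subseteq> full_cells N"
    using quadtree_subset_full_cells by blast
  moreover have "T j \<subseteq> ?Tup"
    using assms(2) by auto
  ultimately have "\<exists>S. minimal_balancing_set ?Tup (T j) j S"
    by (intro ex_minimal_balancing_set[OF balancing_set_full_cells] finite_full_cells) auto
  then show ?thesis
    using minimal_balancing_set_unique by blast
qed

end
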